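(* Let $P$ be analytic in $\{\operatorname{Re}z>0\}$ and suppose there are constants $M,a,b>0$ such that for every $\delta\in(0,\tfrac{\pi}{2})$ and every $z\in S(-\tfrac{\pi}{2}+\delta,\tfrac{\pi}{2}-\delta)$, $$|P(z)|<M\exp\!\Big(\frac{b}{\delta}\Big)e^{-a|z|}.$$ Then for every $c$ with $0<c<a$ there exist $h>0$ and $M_h>0$ such that $|P(h+iy)|<M_h e^{-c|y|}$ for all real $y$. Consequently $P\equiv0$.
   Context: For $\alpha<\beta$, $S(\alpha,\beta)=\{z\in\mathbb{C}:0<|z|<\infty,\ \alpha<\arg z<\beta\}$. *)

theory Defs
  imports "HOL-Complex_Analysis.Complex_Analysis"
begin

text \<open>The argument is the principal argument Arg (values in (-pi, pi]); the sectors used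
  here lie inside (-pi/2, pi/2), so no branch issue arises.\<close>
definition sector :: "real \<Rightarrow> real \<Rightarrow> complex set" where
  "sector \<alpha> \<beta> = {z. z \<noteq> 0 \<and> \<alpha> < Arg z \<and> Arg z < \<beta>}"

end

theory Submission
  imports Defs
begin

text \<open>On the half-plane \<open>Re z \<ge> 2b/(a - c)\<close> one may take \<open>\<delta> = Re z / (2 |z|)\<close> in the
  sector bound: the point lies in the sector and \<open>exp (b/\<delta>) \<le> exp ((a - c) |z|)\<close> consumes
  only part of the decay, leaving \<open>|P z| < M exp (- c |z|)\<close>; on a vertical line \<open>|z| \<ge> |y|\<close>.
  For the vanishing, multiply \<open>P\<close> by the weight \<open>exp (l z (L - Ln z))\<close> with \<open>l = 2c/\<pi>\<close>.
  Its modulus is at most \<open>exp (l Re z (L - ln |z|) + c |z|)\<close>, so the product is bounded by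
  \<open>M exp (l h (L - ln h))\<close> on the line \<open>Re z = h\<close> and by \<open>M\<close> on arcs \<open>|z| = R \<ge> e\<^sup>L\<close>.
  The maximum modulus principle then yields \<open>|P w| \<le> A\<^sub>w exp (- l (Re w - h) L)\<close> for all
  large \<open>L\<close>, so \<open>P w = 0\<close> for \<open>Re w > h\<close>, and \<open>P = 0\<close> by analytic continuation.\<close>

lemma in_sector_if_less_Re_div_norm:
  assumes "0 < \<delta>" and "\<delta> < Re z / norm z"
  shows "z \<in> sector (- pi / 2 + \<delta>) (pi / 2 - \<delta>)"
proof -
  have "0 < Re z / norm z" using assms by linarith
  then have z: "0 < Re z" "z \<noteq> 0" by (auto simp: zero_less_divide_iff)
  have "Re z / norm z = cos \<bar>Arg z\<bar>" using cos_Arg[OF z(2)] by simp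
  also have "\<dots> = sin (pi / 2 - \<bar>Arg z\<bar>)" by (simp add: sin_cos_eq)
  also have "\<dots> \<le> pi / 2 - \<bar>Arg z\<bar>"
    using z(1) Arg_Re_pos[of z] by (intro sin_x_le_x) linarith
  finally show ?thesis using assms z(2) by (auto simp: sector_def)
qed

lemma sector_bound_imp_half_plane_decay:
  fixes P :: "complex \<Rightarrow> complex" and M a b c :: real
  assumes b: "0 < b" and c: "c < a"
    and bound: "\<And>\<delta> z. 0 < \<delta> \<Longrightarrow> \<delta> < pi / 2 \<Longrightarrow>
        z \<in> sector (- pi / 2 + \<delta>) (pi / 2 - \<delta>) \<Longrightarrow>
        norm (P z) < M * exp (b / \<delta>) * exp (- a * norm z)"
    and z: "2 * b / (a - c) \<le> Re z"
  shows "norm (P z) < M * exp (- c * norm z)"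
proof -
  have "0 < 2 * b / (a - c)" using b c by simp
  then have Re_pos: "0 < Re z" using z by linarith
  have "Re z \<le> norm z" by (rule complex_Re_le_cmod)
  then have "0 < norm z" using Re_pos by linarith
  define \<delta> where "\<delta> = Re z / (2 * norm z)"
  have "\<delta> \<le> 1 / 2" using \<open>Re z \<le> norm z\<close> \<open>0 < norm z\<close> by (simp add: \<delta>_def)
  then have "\<delta> < pi / 2" using pi_gt3 by linarith
  have "0 < \<delta>" "\<delta> < Re z / norm z"
    using Re_pos \<open>0 < norm z\<close> by (simp_all add: \<delta>_def field_simps)
  then have "z \<in> sector (- pi / 2 + \<delta>) (pi / 2 - \<delta>)" by (rule in_sector_if_less_Re_div_norm)
  then have P_lt: "norm (P z) < M * (exp (b / \<delta>) * exp (- a * norm z))"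
    using bound \<open>0 < \<delta>\<close> \<open>\<delta> < pi / 2\<close> by (simp only: mult.assoc)
  then have "0 < M" by (rule zero_less_mult_pos2[OF order_le_less_trans[OF norm_ge_zero]]) simp
  have "b / \<delta> = 2 * b / Re z * norm z" by (simp add: \<delta>_def)
  also have "\<dots> \<le> (a - c) * norm z"
    using Re_pos c z by (intro mult_right_mono) (simp_all add: field_simps)
  finally have "b / \<delta> \<le> (a - c) * norm z" .
  then have exp_le: "exp (b / \<delta>) * exp (- a * norm z) \<le> exp (- c * norm z)"
    by (simp add: left_diff_distrib flip: exp_add)
  have "M * (exp (b / \<delta>) * exp (- a * norm z)) \<le> M * exp (- c * norm z)"
    using exp_le \<open>0 < M\<close> by (intro mult_left_mono) auto
  with P_lt show ?thesis by (rule less_le_trans)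
qed

lemma frontier_half_plane_Int_cball:
  "frontier ({z. h \<le> Re z} \<inter> cball 0 R) \<subseteq> {z. Re z = h} \<union> sphere 0 R"
proof -
  have "frontier {z. h \<le> Re z} = {z. Re z = h}"
    using frontier_halfspace_ge[of "1::complex" h] by simp
  then show ?thesis by (cases "R \<le> 0") (auto simp: frontier_Int)
qed

lemma maximum_modulus_half_plane_Int_cball:
  fixes F :: "complex \<Rightarrow> complex"
  assumes hol: "F holomorphic_on {z. 0 < Re z}" and "0 < h"
    and line: "\<And>z. Re z = h \<Longrightarrow> norm z \<le> R \<Longrightarrow> norm (F z) \<le> K"
    and arc: "\<And>z. h \<le> Re z \<Longrightarrow> norm z = R \<Longrightarrow> norm (F z) \<le> K"
    and w: "h \<le> Re w" "norm w \<le> R"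
  shows "norm (F w) \<le> K"
proof -
  let ?S = "{z. h \<le> Re z} \<inter> cball 0 R"
  have closed: "closed ?S" by (intro closed_Int closed_halfspace_Re_ge closed_cball)
  have sub: "?S \<subseteq> {z. 0 < Re z}" using \<open>0 < h\<close> by auto
  show ?thesis
  proof (rule maximum_modulus_frontier[where f = F and S = ?S])
    show "F holomorphic_on interior ?S"
      using hol by (rule holomorphic_on_subset) (use sub interior_subset in blast)
    show "continuous_on (closure ?S) F"
      using holomorphic_on_imp_continuous_on[OF holomorphic_on_subset[OF hol sub]] closed
      by simp
    show "bounded ?S" by (intro bounded_Int disjI2 bounded_cball)
    show "w \<in> ?S" using w by simp
    show "norm (F z) \<le> K" if "z \<in> frontier ?S" for z
    proof -
      have "z \<in> ?S" using that closed frontier_subset_closed by blast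
      moreover have "Re z = h \<or> norm z = R" using that frontier_half_plane_Int_cball[of h R] by auto
      ultimately show ?thesis using line arc by auto
    qed
  qed
qed

lemma norm_exp_mult_Ln_le:
  fixes l L :: real
  assumes "0 \<le> l" and "0 < Re z"
  shows "norm (exp (of_real l * z * (of_real L - Ln z)))
           \<le> exp (l * Re z * (L - ln (norm z)) + l * pi / 2 * norm z)"
proof -
  have "z \<noteq> 0" using assms by auto
  have "Im z * Im (Ln z) \<le> \<bar>Im z\<bar> * \<bar>Im (Ln z)\<bar>" by (metis abs_ge_self abs_mult)
  also have "\<dots> \<le> norm z * (pi / 2)"
    using abs_Im_le_cmod Re_Ln_pos_lt_imp[OF assms(2)] by (intro mult_mono) auto
  finally have "l * (Im z * Im (Ln z)) \<le> l * (norm z * (pi / 2))"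
    using assms(1) by (rule mult_left_mono)
  then have Im_le: "l * (Im z * Im (Ln z)) \<le> l * pi / 2 * norm z" by (simp add: mult_ac)
  have "norm (exp (of_real l * z * (of_real L - Ln z)))
          = exp (l * Re z * (L - ln (norm z)) + l * (Im z * Im (Ln z)))"
    using \<open>z \<noteq> 0\<close> by (simp add: algebra_simps)
  also have "\<dots> \<le> exp (l * Re z * (L - ln (norm z)) + l * pi / 2 * norm z)"
    using Im_le by simp
  finally show ?thesis .
qed

lemma nonpos_if_le_exp_decay:
  fixes x A k L0 :: real
  assumes "0 < k" and "\<And>L. L0 \<le> L \<Longrightarrow> x \<le> A * exp (- k * L)"
  shows "x \<le> 0"
proof (rule tendsto_lowerbound)
  have "filterlim (\<lambda>L. - k * L) at_bot at_top"
    using assms(1)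
    by (simp add: filterlim_uminus_at_bot
        filterlim_tendsto_pos_mult_at_top[OF tendsto_const _ filterlim_ident])
  then show "((\<lambda>L. A * exp (- k * L)) \<longlongrightarrow> 0) at_top"
    by (intro tendsto_mult_right_zero filterlim_compose[OF exp_at_bot])
  show "\<forall>\<^sub>F L in at_top. x \<le> A * exp (- k * L)"
    using eventually_ge_at_top[of L0] assms(2) by (rule eventually_mono)
qed simp

lemma norm_mult_exp_Ln_le_on_half_plane:
  fixes Q :: "complex \<Rightarrow> complex" and M c h L :: real
  assumes hol: "Q holomorphic_on {z. 0 < Re z}" and h: "0 < h" and c: "0 < c"
    and decay: "\<And>z. h \<le> Re z \<Longrightarrow> norm (Q z) \<le> M * exp (- c * norm z)"
    and L: "ln h \<le> L" and w: "h \<le> Re w"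
  shows "norm (Q w * exp (of_real (2 * c / pi) * w * (of_real L - Ln w)))
           \<le> M * exp (2 * c / pi * h * (L - ln h))"
proof -
  define l where "l = 2 * c / pi"
  define F where "F z = Q z * exp (of_real l * z * (of_real L - Ln z))" for z
  have "0 < l" using c by (simp add: l_def)
  have "norm (Q (of_real h)) \<le> M * exp (- c * norm (of_real h :: complex))"
    using decay[of "of_real h"] by simp
  then have "0 \<le> M * exp (- c * norm (of_real h :: complex))"
    by (rule order_trans[OF norm_ge_zero])
  then have "0 \<le> M" by (simp add: zero_le_mult_iff)
  have F_le: "norm (F z) \<le> M * exp (l * Re z * (L - ln (norm z)))" if "h \<le> Re z" for z
  proof -
    have "0 < Re z" using that h by linarith
    have "norm (F z) \<le> M * exp (- c * norm z) *
        exp (l * Re z * (L - ln (norm z)) + l * pi / 2 * norm z)"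
      unfolding F_def norm_mult
      using decay[OF that] norm_exp_mult_Ln_le[OF less_imp_le[OF \<open>0 < l\<close>] \<open>0 < Re z\<close>] \<open>0 \<le> M\<close>
      by (intro mult_mono) auto
    also have "\<dots> = M * exp (l * Re z * (L - ln (norm z)))"
      by (simp add: l_def mult.assoc flip: exp_add)
    finally show ?thesis .
  qed
  have F_le_K: "norm (F z) \<le> M * exp (l * h * (L - ln h))"
    if "h \<le> Re z" and "l * Re z * (L - ln (norm z)) \<le> l * h * (L - ln h)" for z
    using F_le[OF that(1)] that(2) \<open>0 \<le> M\<close> by (meson exp_le_cancel_iff mult_left_mono order_trans)
  have "norm (F w) \<le> M * exp (l * h * (L - ln h))"
  proof (rule maximum_modulus_half_plane_Int_cball[where F = F and R = "max (norm w) (exp L)"])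
    show "F holomorphic_on {z. 0 < Re z}"
      unfolding F_def using hol
      by (intro holomorphic_intros holomorphic_on_Ln) (auto simp: complex_nonpos_Reals_iff)
    show "0 < h" "h \<le> Re w" by fact+
    show "norm w \<le> max (norm w) (exp L)" by simp
  next
    fix z assume z: "Re z = h"
    then have "ln h \<le> ln (norm z)" using h complex_Re_le_cmod[of z] by (intro ln_mono) auto
    then have "l * Re z * (L - ln (norm z)) \<le> l * h * (L - ln h)"
      using z \<open>0 < l\<close> h by (simp add: mult_left_mono)
    then show "norm (F z) \<le> M * exp (l * h * (L - ln h))"
      using z by (intro F_le_K) auto
  next
    fix z assume z: "h \<le> Re z" "norm z = max (norm w) (exp L)"
    then have "exp L \<le> norm z" by simp
    then have "L \<le> ln (norm z)" using exp_gt_zero[of L] by (subst ln_ge_iff) auto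
    then have "l * Re z * (L - ln (norm z)) \<le> 0"
      using z h \<open>0 < l\<close> by (intro mult_nonneg_nonpos) auto
    also have "0 \<le> l * h * (L - ln h)" using \<open>0 < l\<close> h L by simp
    finally show "norm (F z) \<le> M * exp (l * h * (L - ln h))"
      using z by (intro F_le_K) auto
  qed
  then show ?thesis by (simp add: F_def l_def)
qed

lemma exp_decay_imp_eq_0_right_of_line:
  fixes Q :: "complex \<Rightarrow> complex" and M c h :: real
  assumes hol: "Q holomorphic_on {z. 0 < Re z}" and h: "0 < h" and c: "0 < c"
    and decay: "\<And>z. h \<le> Re z \<Longrightarrow> norm (Q z) \<le> M * exp (- c * norm z)"
    and w: "h < Re w"
  shows "Q w = 0"
proof -
  define l where "l = 2 * c / pi"
  define A where "A = M * exp (l * (Re w * ln (norm w) - Im w * Im (Ln w) - h * ln h))"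
  have "w \<noteq> 0" using w h by auto
  have "norm (Q w) \<le> A * exp (- (l * (Re w - h)) * L)" if "ln h \<le> L" for L
  proof -
    define E where "E = l * (Re w * (L - ln (norm w)) + Im w * Im (Ln w))"
    have "norm (Q w * exp (of_real l * w * (of_real L - Ln w))) \<le> M * exp (l * h * (L - ln h))"
      unfolding l_def
      by (rule norm_mult_exp_Ln_le_on_half_plane[OF hol h c decay that less_imp_le[OF w]])
    moreover have "norm (exp (of_real l * w * (of_real L - Ln w))) = exp E"
      using \<open>w \<noteq> 0\<close> by (simp add: E_def algebra_simps)
    ultimately have "norm (Q w) * exp E \<le> M * exp (l * h * (L - ln h))"
      by (simp add: norm_mult)
    then have "norm (Q w) \<le> M * exp (l * h * (L - ln h)) / exp E"
      by (simp add: pos_le_divide_eq)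
    also have "\<dots> = A * exp (- (l * (Re w - h)) * L)"
      unfolding A_def E_def by (simp add: exp_diff algebra_simps flip: exp_add)
    finally show ?thesis .
  qed
  moreover have "0 < l * (Re w - h)" using c w by (simp add: l_def)
  ultimately have "norm (Q w) \<le> 0" by (intro nonpos_if_le_exp_decay) auto
  then show ?thesis by simp
qed

lemma exp_decay_imp_eq_0:
  fixes Q :: "complex \<Rightarrow> complex" and M c h :: real
  assumes hol: "Q holomorphic_on {z. 0 < Re z}" and h: "0 < h" and c: "0 < c"
    and decay: "\<And>z. h \<le> Re z \<Longrightarrow> norm (Q z) \<le> M * exp (- c * norm z)"
    and z: "0 < Re z"
  shows "Q z = 0"
proof (rule analytic_continuation_open[where f = Q and g = "\<lambda>_. 0"])
  show "open {w. h < Re w}" "open {w. 0 < Re w}" by (simp_all add: open_halfspace_Re_gt)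
  show "connected {w. 0 < Re w}" by (intro convex_connected convex_halfspace_Re_gt)
  have "of_real (h + 1) \<in> {w. h < Re w}" by simp
  then show "{w. h < Re w} \<noteq> {}" by blast
  show "{w. h < Re w} \<subseteq> {w. 0 < Re w}" using h by auto
  show "Q w = 0" if "w \<in> {w. h < Re w}" for w
    using exp_decay_imp_eq_0_right_of_line[OF hol h c decay] that by simp
qed (use hol z in auto)

theorem mainTheorem8:
  fixes P :: "complex \<Rightarrow> complex" and M a b :: real
  assumes hol: "P holomorphic_on {z. Re z > 0}"
    and M: "M > 0" and a: "a > 0" and b: "b > 0"
    and bound: "\<And>\<delta> z. 0 < \<delta> \<Longrightarrow> \<delta> < pi / 2 \<Longrightarrow>
        z \<in> sector (- pi / 2 + \<delta>) (pi / 2 - \<delta>) \<Longrightarrow>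
        norm (P z) < M * exp (b / \<delta>) * exp (- a * norm z)"
  shows "(\<forall>c. 0 < c \<and> c < a \<longrightarrow>
            (\<exists>h Mh. h > 0 \<and> Mh > 0 \<and>
               (\<forall>y::real. norm (P (complex_of_real h + \<i> * complex_of_real y))
                            < Mh * exp (- c * \<bar>y\<bar>))))
         \<and> (\<forall>z. Re z > 0 \<longrightarrow> P z = 0)"
proof (intro conjI allI impI)
  fix c assume c: "0 < c \<and> c < a"
  define h where "h = 2 * b / (a - c)"
  have "0 < h" using b c by (simp add: h_def)
  moreover have "norm (P (of_real h + \<i> * of_real y)) < M * exp (- c * \<bar>y\<bar>)" for y
  proof -
    let ?z = "of_real h + \<i> * of_real y"
    have "norm (P ?z) < M * exp (- c * norm ?z)"
      using sector_bound_imp_half_plane_decay[OF b _ bound] c by (simp add: h_def)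
    also have "\<dots> \<le> M * exp (- c * \<bar>y\<bar>)"
      using abs_Im_le_cmod[of ?z] c M by simp
    finally show ?thesis .
  qed
  ultimately show "\<exists>h Mh. h > 0 \<and> Mh > 0 \<and>
      (\<forall>y. norm (P (of_real h + \<i> * of_real y)) < Mh * exp (- c * \<bar>y\<bar>))"
    using M by blast
next
  fix z :: complex assume "0 < Re z"
  have decay: "norm (P w) \<le> M * exp (- (a / 2) * norm w)" if "4 * b / a \<le> Re w" for w
    using sector_bound_imp_half_plane_decay[OF b _ bound, of "a / 2" w] a that by simp
  show "P z = 0"
    by (rule exp_decay_imp_eq_0[OF hol _ _ decay \<open>0 < Re z\<close>]) (use a b in simp_all)
qed

end
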